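(* Let $A\in\mathbb R^{n\times n}$ be Hurwitz and let $L\in\mathbb R^{n\times m}$ have full column rank. Then there exist right-invertible matrices $P$ and $\overline P$ (with $n$ columns) and right inverses $P^\dagger$, $\overline P^\dagger$ (i.e. $PP^\dagger=I$, $\overline P\,\overline P^\dagger=I$) such that (C1) $P^\dagger P+\overline P^\dagger\overline P=I_n$; (C2) $PAP^\dagger$ and $\overline PA\overline P^\dagger$ are Hurwitz; (C3) $PL=0$ and $\overline PL$ is (square and) nonsingular.
   Context: A square real matrix is Hurwitz (stable) if all its eigenvalues have negative real part. *)

theory Defs
  imports Complex_Main "Jordan_Normal_Form.Char_Poly" "Jordan_Normal_Form.DL_Rank"
begin

definition hurwitz :: "real mat \<Rightarrow> bool" where
  "hurwitz A \<longleftrightarrow> A \<in> carrier_mat (dim_row A) (dim_row A) \<and>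
     (\<forall>ev. eigenvalue (map_mat complex_of_real A) ev \<longrightarrow> Re ev < 0)"

end

theory Submission
  imports Defs "Jordan_Normal_Form.Schur_Decomposition" "Jordan_Normal_Form.Matrix_Kernel"
begin

text \<open>A Hurwitz matrix \<open>A\<close> has a Lyapunov matrix \<open>X\<close>: a real symmetric matrix with
  \<open>y\<^sup>* X y > 0\<close> and \<open>Re (y\<^sup>* X A y) < 0\<close> for all complex \<open>y \<noteq> 0\<close>. It is read off from a
  Schur form of \<open>A\<close> whose strictly upper triangular part has been made small by a diagonal
  similarity, which turns the triangular matrix into a dissipative one. Every compression
  \<open>(V\<^sup>T X V)\<^sup>-\<^sup>1 V\<^sup>T X A V\<close> with injective \<open>V\<close> is again Hurwitz, because an eigenvector \<open>v\<close> with
  eigenvalue \<open>\<lambda>\<close> gives \<open>y = V v\<close> with \<open>\<lambda> y\<^sup>* X y = y\<^sup>* X A y\<close>. The projections are the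
  \<open>X\<close>-orthogonal ones: \<open>Pb = (L\<^sup>T X L)\<^sup>-\<^sup>1 L\<^sup>T X\<close> with \<open>Pbd = L\<close>, and \<open>P = (V\<^sup>T X V)\<^sup>-\<^sup>1 V\<^sup>T X\<close>
  with \<open>Pd = V\<close>, where the columns of \<open>V\<close> form a basis of \<open>ker Pb\<close>, the \<open>X\<close>-orthogonal
  complement of the range of \<open>L\<close>.\<close>

abbreviation cmat :: "real mat \<Rightarrow> complex mat" where
  "cmat \<equiv> map_mat complex_of_real"

lemma cmat_mult: "dim_col A = dim_row B \<Longrightarrow> cmat (A * B) = cmat A * cmat B"
  by (rule of_real_hom.mat_hom_mult) auto

lemma conjugate_mult_mat_vec:
  fixes R :: "complex mat"
  assumes "R \<in> carrier_mat n k" and "y \<in> carrier_vec k"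
  shows "conjugate (R *\<^sub>v y) = map_mat cnj R *\<^sub>v conjugate y"
  using assms
  by (intro eq_vecI) (auto simp: mult_mat_vec_def scalar_prod_def sum_conjugate conjugate_dist_mul)

lemma adjoint_scalar_prod:
  fixes R :: "complex mat"
  assumes R: "R \<in> carrier_mat n k" and y: "y \<in> carrier_vec k" and w: "w \<in> carrier_vec n"
  shows "conjugate y \<bullet> ((map_mat cnj R)\<^sup>T *\<^sub>v w) = conjugate (R *\<^sub>v y) \<bullet> w"
proof -
  have "(map_mat cnj R)\<^sup>T \<in> carrier_mat k n" using R by simp
  from transpose_vec_mult_scalar[OF this w, of "conjugate y"] y
  show ?thesis by (simp add: conjugate_mult_mat_vec[OF R y])
qed

lemma adjoint_mult_quadratic_form:
  fixes R M :: "complex mat"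
  assumes R: "R \<in> carrier_mat n k" and y: "y \<in> carrier_vec k" and M: "M \<in> carrier_mat n k"
  shows "conjugate y \<bullet> (((map_mat cnj R)\<^sup>T * M) *\<^sub>v y) = conjugate (R *\<^sub>v y) \<bullet> (M *\<^sub>v y)"
proof -
  have "((map_mat cnj R)\<^sup>T * M) *\<^sub>v y = (map_mat cnj R)\<^sup>T *\<^sub>v (M *\<^sub>v y)" using R M y by simp
  then show ?thesis using adjoint_scalar_prod[OF R y] M y by simp
qed

lemma cmat_congruence_quadratic_form:
  fixes V B :: "real mat"
  assumes V: "V \<in> carrier_mat n k" and B: "B \<in> carrier_mat n n" and v: "v \<in> carrier_vec k"
  shows "conjugate v \<bullet> (cmat (V\<^sup>T * B * V) *\<^sub>v v) =
    conjugate (cmat V *\<^sub>v v) \<bullet> (cmat B *\<^sub>v (cmat V *\<^sub>v v))"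
proof -
  have VT: "cmat (V\<^sup>T) = (map_mat cnj (cmat V))\<^sup>T" by auto
  have "cmat (V\<^sup>T) \<in> carrier_mat k n" "cmat B \<in> carrier_mat n n" "cmat V \<in> carrier_mat n k"
    using V B by auto
  moreover have "cmat (V\<^sup>T * B * V) = cmat (V\<^sup>T) * (cmat B * cmat V)"
    using V B by (simp add: cmat_mult)
  ultimately have "cmat (V\<^sup>T * B * V) *\<^sub>v v = cmat (V\<^sup>T) *\<^sub>v (cmat B *\<^sub>v (cmat V *\<^sub>v v))"
    using v by (simp add: assoc_mult_mat_vec[of _ k n _ k])
  then have "cmat (V\<^sup>T * B * V) *\<^sub>v v = (map_mat cnj (cmat V))\<^sup>T *\<^sub>v (cmat B *\<^sub>v (cmat V *\<^sub>v v))"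
    by (simp only: VT)
  then show ?thesis
    using adjoint_scalar_prod[of "cmat V" n k v] V B v by simp
qed

lemma Re_cmat_mult_vec:
  "V \<in> carrier_mat n k \<Longrightarrow> a \<in> carrier_vec k \<Longrightarrow> map_vec Re (cmat V *\<^sub>v a) = V *\<^sub>v map_vec Re a"
  by (intro eq_vecI) (auto simp: mult_mat_vec_def scalar_prod_def Re_sum)

lemma Im_cmat_mult_vec:
  "V \<in> carrier_mat n k \<Longrightarrow> a \<in> carrier_vec k \<Longrightarrow> map_vec Im (cmat V *\<^sub>v a) = V *\<^sub>v map_vec Im a"
  by (intro eq_vecI) (auto simp: mult_mat_vec_def scalar_prod_def Im_sum)

lemma cmat_mult_vec_eq_0:
  fixes V :: "real mat"
  assumes V: "V \<in> carrier_mat n k"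
    and V_inj: "\<And>a. a \<in> carrier_vec k \<Longrightarrow> V *\<^sub>v a = 0\<^sub>v n \<Longrightarrow> a = 0\<^sub>v k"
    and a: "a \<in> carrier_vec k" and Va: "cmat V *\<^sub>v a = 0\<^sub>v n"
  shows "a = 0\<^sub>v k"
proof -
  have "map_vec Re (0\<^sub>v n) = 0\<^sub>v n" "map_vec Im (0\<^sub>v n) = 0\<^sub>v n" by auto
  then have "map_vec Re a = 0\<^sub>v k" "map_vec Im a = 0\<^sub>v k"
    using V_inj Re_cmat_mult_vec[OF V a] Im_cmat_mult_vec[OF V a] Va a by auto
  then show ?thesis
    using a by (intro eq_vecI) (auto simp: vec_eq_iff complex_eq_iff)
qed

text \<open>The quadratic forms are taken over complex vectors so that they detect the real parts of the
  non-real eigenvalues of \<open>A\<close> as well.\<close>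

definition lyapunov_matrix :: "nat \<Rightarrow> real mat \<Rightarrow> real mat \<Rightarrow> bool" where
  "lyapunov_matrix n A X \<longleftrightarrow> X \<in> carrier_mat n n \<and> X\<^sup>T = X \<and>
     (\<forall>y \<in> carrier_vec n. y \<noteq> 0\<^sub>v n \<longrightarrow> conjugate y \<bullet> (cmat X *\<^sub>v y) > 0) \<and>
     (\<forall>y \<in> carrier_vec n. y \<noteq> 0\<^sub>v n \<longrightarrow> Re (conjugate y \<bullet> (cmat X *\<^sub>v (cmat A *\<^sub>v y))) < 0)"

lemma lyapunov_matrix_pos_real:
  assumes X: "lyapunov_matrix n A X" and x: "x \<in> carrier_vec n" and x0: "x \<noteq> 0\<^sub>v n"
  shows "x \<bullet> (X *\<^sub>v x) > 0"
proof -
  define y where "y = map_vec complex_of_real x"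
  have y: "y \<in> carrier_vec n" and y0: "y \<noteq> 0\<^sub>v n"
    using x x0 by (auto simp: y_def vec_eq_iff)
  have "X \<in> carrier_mat n n" using X by (simp add: lyapunov_matrix_def)
  then have "conjugate y \<bullet> (cmat X *\<^sub>v y) = complex_of_real (x \<bullet> (X *\<^sub>v x))"
    using x unfolding y_def by (simp add: scalar_prod_def mult_mat_vec_def)
  then show ?thesis
    using X y y0 by (auto simp: lyapunov_matrix_def less_complex_def)
qed

lemma compression_eigenvector_quadratic_form:
  fixes A X V W :: "real mat"
  assumes A: "A \<in> carrier_mat n n" and X: "X \<in> carrier_mat n n" and V: "V \<in> carrier_mat n r"
    and W: "W \<in> carrier_mat r r" and W_inv: "(V\<^sup>T * X * V) * W = 1\<^sub>m r"
    and v: "v \<in> carrier_vec r" and ev: "cmat (W * V\<^sup>T * X * A * V) *\<^sub>v v = ev \<cdot>\<^sub>v v"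
  shows "conjugate (cmat V *\<^sub>v v) \<bullet> (cmat X *\<^sub>v (cmat A *\<^sub>v (cmat V *\<^sub>v v))) =
    ev * (conjugate (cmat V *\<^sub>v v) \<bullet> (cmat X *\<^sub>v (cmat V *\<^sub>v v)))"
proof -
  let ?G = "V\<^sup>T * X * V" and ?N = "V\<^sup>T * (X * A) * V" and ?M = "W * V\<^sup>T * X * A * V"
  have G: "?G \<in> carrier_mat r r" and N: "?N \<in> carrier_mat r r" and M: "?M \<in> carrier_mat r r"
    using X A V W by auto
  have "?M = W * ?N"
    using X A V W by (smt (verit) assoc_mult_mat mult_carrier_mat transpose_carrier_mat)
  then have GM_real: "?G * ?M = ?N"
    using G N W W_inv by (simp add: assoc_mult_mat[symmetric, of _ r r _ r _ r] left_mult_one_mat[of _ r r])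
  have "dim_col ?G = dim_row ?M" using V W by simp
  from cmat_mult[OF this] have GM: "cmat ?N = cmat ?G * cmat ?M"
    by (simp only: GM_real)
  have G_c: "cmat ?G \<in> carrier_mat r r" and M_c: "cmat ?M \<in> carrier_mat r r"
    using G M by (simp_all only: map_carrier_mat)
  have "conjugate v \<bullet> (cmat ?N *\<^sub>v v) = conjugate v \<bullet> (cmat ?G *\<^sub>v (ev \<cdot>\<^sub>v v))"
    unfolding GM ev[symmetric] assoc_mult_mat_vec[OF G_c M_c v] ..
  also have "\<dots> = conjugate v \<bullet> (ev \<cdot>\<^sub>v (cmat ?G *\<^sub>v v))"
    by (simp only: mult_mat_vec[OF G_c v])
  also have "\<dots> = ev * (conjugate v \<bullet> (cmat ?G *\<^sub>v v))"
    using G_c v by (intro scalar_prod_smult_distrib[of _ r]) auto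
  finally have "conjugate v \<bullet> (cmat ?N *\<^sub>v v) = ev * (conjugate v \<bullet> (cmat ?G *\<^sub>v v))" .
  moreover have "cmat (X * A) *\<^sub>v (cmat V *\<^sub>v v) = cmat X *\<^sub>v (cmat A *\<^sub>v (cmat V *\<^sub>v v))"
    using X A V v by (simp add: cmat_mult)
  ultimately show ?thesis
    using cmat_congruence_quadratic_form[OF V _ v, of "X * A"] cmat_congruence_quadratic_form[OF V X v]
      X A by simp
qed

lemma hurwitz_compression:
  fixes A X V W :: "real mat"
  assumes A: "A \<in> carrier_mat n n" and X: "lyapunov_matrix n A X"
    and V: "V \<in> carrier_mat n r"
    and V_inj: "\<And>a. a \<in> carrier_vec r \<Longrightarrow> V *\<^sub>v a = 0\<^sub>v n \<Longrightarrow> a = 0\<^sub>v r"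
    and W: "W \<in> carrier_mat r r" and W_inv: "(V\<^sup>T * X * V) * W = 1\<^sub>m r"
  shows "hurwitz (W * V\<^sup>T * X * A * V)"
  unfolding hurwitz_def
proof (intro conjI allI impI)
  let ?M = "W * V\<^sup>T * X * A * V"
  have Xc: "X \<in> carrier_mat n n" using X by (simp add: lyapunov_matrix_def)
  have M: "?M \<in> carrier_mat r r" using Xc A V W by auto
  then show "?M \<in> carrier_mat (dim_row ?M) (dim_row ?M)" using W by (simp add: carrier_matD)
  fix ev assume "eigenvalue (cmat ?M) ev"
  then obtain v where v: "v \<in> carrier_vec r" "v \<noteq> 0\<^sub>v r" and ev: "cmat ?M *\<^sub>v v = ev \<cdot>\<^sub>v v"
    unfolding eigenvalue_def eigenvector_def using M by auto
  define y where "y = cmat V *\<^sub>v v"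
  have y: "y \<in> carrier_vec n" using V v(1) by (simp add: y_def)
  have y0: "y \<noteq> 0\<^sub>v n" using cmat_mult_vec_eq_0[OF V V_inj v(1)] v(2) unfolding y_def by blast
  have "conjugate y \<bullet> (cmat X *\<^sub>v (cmat A *\<^sub>v y)) = ev * (conjugate y \<bullet> (cmat X *\<^sub>v y))"
    unfolding y_def by (rule compression_eigenvector_quadratic_form[OF A Xc V W W_inv v(1) ev])
  with X y y0 have "conjugate y \<bullet> (cmat X *\<^sub>v y) > 0" and "Re (ev * (conjugate y \<bullet> (cmat X *\<^sub>v y))) < 0"
    by (auto simp: lyapunov_matrix_def)
  then show "Re ev < 0"
    by (auto simp: less_complex_def mult_less_0_iff)
qed

lemma sum_cmod_square_pos:
  fixes z :: "complex vec"
  assumes z: "z \<in> carrier_vec n" "z \<noteq> 0\<^sub>v n"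
  shows "(\<Sum>i<n. (cmod (z $ i))\<^sup>2) > 0"
proof -
  obtain i where i: "i < n" "z $ i \<noteq> 0"
    using z by (metis eq_vecI carrier_vecD index_zero_vec(1) index_zero_vec(2))
  have "(cmod (z $ i))\<^sup>2 \<le> (\<Sum>i<n. (cmod (z $ i))\<^sup>2)"
    by (rule member_le_sum) (use i in auto)
  moreover have "(cmod (z $ i))\<^sup>2 > 0" using i by simp
  ultimately show ?thesis by linarith
qed

lemma sum_sum_mult_le:
  fixes f :: "nat \<Rightarrow> real"
  shows "(\<Sum>i<n. \<Sum>j<n. f i * f j) \<le> real n * (\<Sum>i<n. (f i)\<^sup>2)"
proof -
  have "(\<Sum>i<n. \<Sum>j<n. f i * f j) \<le> (\<Sum>i<n. \<Sum>j<n. ((f i)\<^sup>2 + (f j)\<^sup>2) / 2)"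
  proof (intro sum_mono)
    fix i j
    have "0 \<le> (f i - f j)\<^sup>2" by simp
    then show "f i * f j \<le> ((f i)\<^sup>2 + (f j)\<^sup>2) / 2" by (simp add: power2_eq_square algebra_simps)
  qed
  also have "\<dots> = real n * (\<Sum>i<n. (f i)\<^sup>2)"
    by (simp add: add_divide_distrib sum.distrib sum_divide_distrib[symmetric] sum_distrib_left[symmetric])
  finally show ?thesis .
qed

text \<open>For upper triangular \<open>B\<close> this is \<open>D\<^sup>-\<^sup>1 B D\<close> with \<open>D = diag (1, \<epsilon>, \<epsilon>\<^sup>2, \<dots>)\<close>; below the
  diagonal the truncated exponent \<open>j - i\<close> is harmless because those entries vanish.\<close>

definition offdiag_scaled :: "real \<Rightarrow> complex mat \<Rightarrow> complex mat" where
  "offdiag_scaled \<epsilon> B = mat (dim_row B) (dim_col B) (\<lambda>(i, j). B $$ (i, j) * of_real (\<epsilon> ^ (j - i)))"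

lemma offdiag_scaled_carrier [simp]:
  "B \<in> carrier_mat n n \<Longrightarrow> offdiag_scaled \<epsilon> B \<in> carrier_mat n n"
  by (simp add: offdiag_scaled_def)

lemma offdiag_scaled_similar:
  fixes B :: "complex mat"
  assumes B: "B \<in> carrier_mat n n" and ut: "upper_triangular B" and \<epsilon>: "\<epsilon> > 0"
  shows "mat_diag n (\<lambda>i. of_real (inverse (\<epsilon> ^ i))) * B * mat_diag n (\<lambda>i. of_real (\<epsilon> ^ i)) =
    offdiag_scaled \<epsilon> B"
proof -
  have "mat_diag n (\<lambda>i. of_real (inverse (\<epsilon> ^ i))) * B * mat_diag n (\<lambda>i. of_real (\<epsilon> ^ i)) =
    mat n n (\<lambda>(i, j). of_real (inverse (\<epsilon> ^ i)) * B $$ (i, j) * of_real (\<epsilon> ^ j))"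
    using B by (auto simp: mat_diag_mult_left mat_diag_mult_right[of _ n] intro!: eq_matI)
  also have "\<dots> = offdiag_scaled \<epsilon> B"
  proof (rule eq_matI)
    fix i j assume "i < dim_row (offdiag_scaled \<epsilon> B)" and "j < dim_col (offdiag_scaled \<epsilon> B)"
    then have i: "i < n" and j: "j < n" using B by (auto simp: offdiag_scaled_def)
    show "mat n n (\<lambda>(i, j). of_real (inverse (\<epsilon> ^ i)) * B $$ (i, j) * of_real (\<epsilon> ^ j)) $$ (i, j) =
      offdiag_scaled \<epsilon> B $$ (i, j)"
    proof (cases "j < i")
      case True
      then have "B $$ (i, j) = 0" using ut B i unfolding upper_triangular_def by auto
      then show ?thesis using i j B by (simp add: offdiag_scaled_def)
    next
      case False
      then have "inverse (\<epsilon> ^ i) * \<epsilon> ^ j = \<epsilon> ^ (j - i)"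
        using \<epsilon> by (simp add: power_diff divide_inverse mult.commute)
      then have "complex_of_real (inverse (\<epsilon> ^ i)) * complex_of_real (\<epsilon> ^ j) = of_real (\<epsilon> ^ (j - i))"
        by (metis of_real_mult)
      then show ?thesis using i j B by (simp add: algebra_simps offdiag_scaled_def)
    qed
  qed (use B in \<open>auto simp: offdiag_scaled_def\<close>)
  finally show ?thesis .
qed

lemma offdiag_scaled_term_le:
  fixes B :: "complex mat" and z :: "complex vec"
  assumes B: "B \<in> carrier_mat n n" and ut: "upper_triangular B"
    and \<epsilon>: "0 < \<epsilon>" "\<epsilon> \<le> 1"
    and K: "0 \<le> K" "\<And>i j. i < n \<Longrightarrow> j < n \<Longrightarrow> cmod (B $$ (i, j)) \<le> K"
    and c: "\<And>i. i < n \<Longrightarrow> c \<le> - Re (B $$ (i, i))"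
    and i: "i < n" and j: "j < n"
  shows "Re (cnj (z $ i) * offdiag_scaled \<epsilon> B $$ (i, j) * z $ j)
    \<le> (if i = j then - c * (cmod (z $ i))\<^sup>2 else 0) + \<epsilon> * K * (cmod (z $ i) * cmod (z $ j))"
proof -
  have nonneg: "0 \<le> \<epsilon> * K * (cmod (z $ i) * cmod (z $ j))" using \<epsilon> K by simp
  consider "i = j" | "j < i" | "i < j" by linarith
  then show ?thesis
  proof cases
    case 1
    have "cnj (z $ i) * offdiag_scaled \<epsilon> B $$ (i, j) * z $ j = B $$ (i, i) * (cnj (z $ i) * z $ i)"
      using i 1 B by (simp add: offdiag_scaled_def algebra_simps)
    also have "\<dots> = B $$ (i, i) * of_real ((cmod (z $ i))\<^sup>2)"
      by (metis complex_norm_square mult.commute)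
    finally have "Re (cnj (z $ i) * offdiag_scaled \<epsilon> B $$ (i, j) * z $ j) = Re (B $$ (i, i)) * (cmod (z $ i))\<^sup>2"
      by simp
    also have "\<dots> \<le> - c * (cmod (z $ i))\<^sup>2" using c[OF i] by (intro mult_right_mono) auto
    finally show ?thesis using 1 nonneg by simp
  next
    case 2
    then have "B $$ (i, j) = 0" using ut B i unfolding upper_triangular_def by auto
    then show ?thesis using 2 nonneg i j B by (simp add: offdiag_scaled_def)
  next
    case 3
    have "\<epsilon> ^ (j - i) \<le> \<epsilon> ^ 1" by (rule power_decreasing) (use 3 \<epsilon> in auto)
    then have "\<epsilon> ^ (j - i) \<le> \<epsilon>" by simp
    have "Re (cnj (z $ i) * offdiag_scaled \<epsilon> B $$ (i, j) * z $ j)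
        \<le> cmod (cnj (z $ i) * offdiag_scaled \<epsilon> B $$ (i, j) * z $ j)"
      by (rule complex_Re_le_cmod)
    also have "\<dots> = cmod (z $ i) * (cmod (B $$ (i, j)) * \<epsilon> ^ (j - i)) * cmod (z $ j)"
      using i j \<epsilon> B by (simp add: offdiag_scaled_def norm_mult norm_power)
    also have "\<dots> \<le> cmod (z $ i) * (K * \<epsilon>) * cmod (z $ j)"
      by (intro mult_right_mono mult_left_mono mult_mono K(2) i j \<open>\<epsilon> ^ (j - i) \<le> \<epsilon>\<close>)
        (use K \<epsilon> in auto)
    finally show ?thesis using 3 by (simp add: algebra_simps)
  qed
qed

lemma offdiag_scaled_quadratic_form_le:
  fixes B :: "complex mat" and z :: "complex vec"
  assumes B: "B \<in> carrier_mat n n" and ut: "upper_triangular B"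
    and \<epsilon>: "0 < \<epsilon>" "\<epsilon> \<le> 1"
    and K: "0 \<le> K" "\<And>i j. i < n \<Longrightarrow> j < n \<Longrightarrow> cmod (B $$ (i, j)) \<le> K"
    and c: "\<And>i. i < n \<Longrightarrow> c \<le> - Re (B $$ (i, i))"
    and z: "z \<in> carrier_vec n"
  shows "Re (conjugate z \<bullet> (offdiag_scaled \<epsilon> B *\<^sub>v z)) \<le> (\<epsilon> * K * real n - c) * (\<Sum>i<n. (cmod (z $ i))\<^sup>2)"
proof -
  have "conjugate z \<bullet> (offdiag_scaled \<epsilon> B *\<^sub>v z) =
      (\<Sum>i<n. \<Sum>j<n. cnj (z $ i) * offdiag_scaled \<epsilon> B $$ (i, j) * z $ j)"
    using z B by (simp add: offdiag_scaled_def scalar_prod_def mult_mat_vec_def sum_distrib_left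
        mult.assoc lessThan_atLeast0)
  then have "Re (conjugate z \<bullet> (offdiag_scaled \<epsilon> B *\<^sub>v z)) =
      (\<Sum>i<n. \<Sum>j<n. Re (cnj (z $ i) * offdiag_scaled \<epsilon> B $$ (i, j) * z $ j))"
    by (simp add: Re_sum)
  also have "\<dots> \<le> (\<Sum>i<n. \<Sum>j<n. (if i = j then - c * (cmod (z $ i))\<^sup>2 else 0)
      + \<epsilon> * K * (cmod (z $ i) * cmod (z $ j)))"
    by (intro sum_mono offdiag_scaled_term_le[OF B ut \<epsilon> K c]) auto
  also have "\<dots> = (\<Sum>i<n. - c * (cmod (z $ i))\<^sup>2) +
      \<epsilon> * K * (\<Sum>i<n. \<Sum>j<n. cmod (z $ i) * cmod (z $ j))"
    by (simp add: sum.distrib sum_distrib_left sum_subtractf sum_negf)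
  also have "\<dots> \<le> (\<Sum>i<n. - c * (cmod (z $ i))\<^sup>2) + \<epsilon> * K * (real n * (\<Sum>i<n. (cmod (z $ i))\<^sup>2))"
    using \<epsilon> K by (intro add_left_mono mult_left_mono sum_sum_mult_le) auto
  also have "\<dots> = (\<epsilon> * K * real n - c) * (\<Sum>i<n. (cmod (z $ i))\<^sup>2)"
    by (simp add: sum_distrib_left sum_subtractf sum_negf algebra_simps)
  finally show ?thesis .
qed

lemma offdiag_scaled_dissipative:
  fixes B :: "complex mat"
  assumes B: "B \<in> carrier_mat n n" and ut: "upper_triangular B"
    and diag: "\<And>i. i < n \<Longrightarrow> Re (B $$ (i, i)) < 0"
  obtains \<epsilon> where "\<epsilon> > 0"
    and "\<And>z. z \<in> carrier_vec n \<Longrightarrow> z \<noteq> 0\<^sub>v n \<Longrightarrow> Re (conjugate z \<bullet> (offdiag_scaled \<epsilon> B *\<^sub>v z)) < 0"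
proof (cases "n = 0")
  case True
  then show ?thesis by (intro that[of 1]) auto
next
  case False
  define c where "c = Min ((\<lambda>i. - Re (B $$ (i, i))) ` {..<n})"
  have c_pos: "c > 0" unfolding c_def using False diag by (subst Min_gr_iff) auto
  have c: "c \<le> - Re (B $$ (i, i))" if "i < n" for i unfolding c_def using that by (intro Min_le) auto
  define K where "K = (\<Sum>i<n. \<Sum>j<n. cmod (B $$ (i, j)))"
  have K_nonneg: "0 \<le> K" unfolding K_def by (intro sum_nonneg) auto
  have K: "cmod (B $$ (i, j)) \<le> K" if "i < n" "j < n" for i j
  proof -
    have "cmod (B $$ (i, j)) \<le> (\<Sum>j<n. cmod (B $$ (i, j)))"
      by (rule member_le_sum) (use that in auto)
    also have "\<dots> \<le> K"
      unfolding K_def by (rule member_le_sum[of _ _ "\<lambda>i. \<Sum>j<n. cmod (B $$ (i, j))"])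
        (use that in \<open>auto intro: sum_nonneg\<close>)
    finally show ?thesis .
  qed
  define \<epsilon> where "\<epsilon> = min 1 (c / (2 * (K * real n + 1)))"
  have \<epsilon>: "0 < \<epsilon>" "\<epsilon> \<le> 1" unfolding \<epsilon>_def using c_pos K_nonneg by (auto intro!: divide_pos_pos add_nonneg_pos)
  have "0 < 2 * (K * real n + 1)" using K_nonneg by (simp add: add_nonneg_pos)
  moreover have "\<epsilon> \<le> c / (2 * (K * real n + 1))" unfolding \<epsilon>_def by simp
  ultimately have "\<epsilon> * (2 * (K * real n + 1)) \<le> c" by (simp add: pos_le_divide_eq)
  then have small: "\<epsilon> * K * real n \<le> c / 2" using \<epsilon> by (simp add: algebra_simps)
  show ?thesis
  proof (rule that[OF \<epsilon>(1)])
    fix z :: "complex vec" assume z: "z \<in> carrier_vec n" "z \<noteq> 0\<^sub>v n"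
    have "Re (conjugate z \<bullet> (offdiag_scaled \<epsilon> B *\<^sub>v z)) \<le> (\<epsilon> * K * real n - c) * (\<Sum>i<n. (cmod (z $ i))\<^sup>2)"
      by (rule offdiag_scaled_quadratic_form_le[OF B ut \<epsilon> K_nonneg K c z(1)])
    also have "\<dots> < 0"
      using sum_cmod_square_pos[OF z] small c_pos by (intro mult_neg_pos) auto
    finally show "Re (conjugate z \<bullet> (offdiag_scaled \<epsilon> B *\<^sub>v z)) < 0" .
  qed
qed

lemma schur_form_negative_diagonal:
  fixes Ac :: "complex mat"
  assumes Ac: "Ac \<in> carrier_mat n n" and eig: "\<And>ev. eigenvalue Ac ev \<Longrightarrow> Re ev < 0"
  obtains T P Q where "similar_mat_wit Ac T P Q" "upper_triangular T"
    "\<And>i. i < n \<Longrightarrow> Re (T $$ (i, i)) < 0"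
proof -
  obtain es where es: "char_poly Ac = (\<Prod>a\<leftarrow>es. [:- a, 1:])"
    using char_poly_factorized[OF Ac] by auto
  obtain T P Q where "schur_decomposition Ac es = (T, P, Q)"
    by (cases "schur_decomposition Ac es") auto
  from schur_decomposition[OF Ac es this]
  have sim: "similar_mat_wit Ac T P Q" and ut: "upper_triangular T" and dg: "diag_mat T = es"
    by auto
  have "Re (T $$ (i, i)) < 0" if "i < n" for i
  proof -
    have "T $$ (i, i) \<in> set es"
      using dg that similar_mat_witD2(5)[OF Ac sim] unfolding diag_mat_def by auto
    then have "poly (char_poly Ac) (T $$ (i, i)) = 0"
      unfolding es by (simp add: poly_prod_list prod_list_zero_iff)
    then show ?thesis using eig eigenvalue_root_char_poly[OF Ac] by simp
  qed
  with sim ut show ?thesis by (rule that)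
qed

lemma stable_similar_dissipative:
  fixes Ac :: "complex mat"
  assumes Ac: "Ac \<in> carrier_mat n n" and eig: "\<And>ev. eigenvalue Ac ev \<Longrightarrow> Re ev < 0"
  obtains R S B :: "complex mat"
  where "R \<in> carrier_mat n n" "S \<in> carrier_mat n n" "B \<in> carrier_mat n n"
    and "S * R = 1\<^sub>m n" and "R * Ac = B * R"
    and "\<And>z. z \<in> carrier_vec n \<Longrightarrow> z \<noteq> 0\<^sub>v n \<Longrightarrow> Re (conjugate z \<bullet> (B *\<^sub>v z)) < 0"
proof -
  obtain T P Q where sim: "similar_mat_wit Ac T P Q" and ut: "upper_triangular T"
    and T_diag: "\<And>i. i < n \<Longrightarrow> Re (T $$ (i, i)) < 0"
    using schur_form_negative_diagonal[OF Ac eig] by metis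
  note PQ = similar_mat_witD2(1)[OF Ac sim] and QP = similar_mat_witD2(2)[OF Ac sim]
    and A_eq = similar_mat_witD2(3)[OF Ac sim] and T = similar_mat_witD2(5)[OF Ac sim]
    and P = similar_mat_witD2(6)[OF Ac sim] and Q = similar_mat_witD2(7)[OF Ac sim]
  obtain \<epsilon> where \<epsilon>: "\<epsilon> > 0" and diss:
    "\<And>z. z \<in> carrier_vec n \<Longrightarrow> z \<noteq> 0\<^sub>v n \<Longrightarrow> Re (conjugate z \<bullet> (offdiag_scaled \<epsilon> T *\<^sub>v z)) < 0"
    using offdiag_scaled_dissipative[OF T ut T_diag] by blast
  define D where "D = mat_diag n (\<lambda>i. complex_of_real (\<epsilon> ^ i))"
  define Di where "Di = mat_diag n (\<lambda>i. complex_of_real (inverse (\<epsilon> ^ i)))"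
  have D: "D \<in> carrier_mat n n" and Di: "Di \<in> carrier_mat n n" unfolding D_def Di_def by auto
  have DDi: "D * Di = 1\<^sub>m n"
    unfolding D_def Di_def mat_diag_diag using \<epsilon> by (simp flip: of_real_mult)
  have scaled: "Di * T * D = offdiag_scaled \<epsilon> T"
    unfolding D_def Di_def by (rule offdiag_scaled_similar[OF T ut \<epsilon>])
  show ?thesis
  proof (rule that[of "Di * Q" "P * D" "offdiag_scaled \<epsilon> T"])
    show "Di * Q \<in> carrier_mat n n" "P * D \<in> carrier_mat n n" "offdiag_scaled \<epsilon> T \<in> carrier_mat n n"
      using Di Q P D T by auto
    have "P * D * (Di * Q) = P * (D * Di) * Q"
      using P D Di Q by (simp add: assoc_mult_mat[of _ n n _ n _ n])
    then show "P * D * (Di * Q) = 1\<^sub>m n" using P Q PQ DDi by simp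
    have "Di * Q * Ac = Di * (Q * P) * T * Q"
      unfolding A_eq using Di Q P T by (simp add: assoc_mult_mat[of _ n n _ n _ n])
    also have "\<dots> = Di * T * (D * Di) * Q" using Di T Q QP DDi by simp
    also have "\<dots> = offdiag_scaled \<epsilon> T * (Di * Q)"
      unfolding scaled[symmetric] using Di T D Q by (simp add: assoc_mult_mat[of _ n n _ n _ n])
    finally show "Di * Q * Ac = offdiag_scaled \<epsilon> T * (Di * Q)" .
  qed (use diss in blast)
qed

lemma quadratic_form_map_Re:
  fixes G :: "complex mat"
  assumes G: "G \<in> carrier_mat n n" and y: "y \<in> carrier_vec n"
  shows "conjugate y \<bullet> (cmat (map_mat Re G) *\<^sub>v y) =
    (conjugate y \<bullet> (G *\<^sub>v y) + cnj (y \<bullet> (G *\<^sub>v conjugate y))) / 2"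
proof -
  have entry: "cnj (y $ i) * (complex_of_real (Re (G $$ (i, j))) * y $ j) =
     (cnj (y $ i) * (G $$ (i, j) * y $ j) + cnj (y $ i * (G $$ (i, j) * cnj (y $ j)))) / 2" for i j
  proof -
    have "complex_of_real (Re (G $$ (i, j))) = (G $$ (i, j) + cnj (G $$ (i, j))) / 2"
      by (simp add: complex_add_cnj)
    then show ?thesis by (simp add: algebra_simps add_divide_distrib)
  qed
  have "conjugate y \<bullet> (cmat (map_mat Re G) *\<^sub>v y) =
      (\<Sum>i<n. \<Sum>j<n. cnj (y $ i) * (complex_of_real (Re (G $$ (i, j))) * y $ j))"
    using G y by (simp add: scalar_prod_def mult_mat_vec_def sum_distrib_left lessThan_atLeast0)
  also have "\<dots> = ((\<Sum>i<n. \<Sum>j<n. cnj (y $ i) * (G $$ (i, j) * y $ j)) +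
      cnj (\<Sum>i<n. \<Sum>j<n. y $ i * (G $$ (i, j) * cnj (y $ j)))) / 2"
    unfolding entry by (simp add: sum_divide_distrib[symmetric] sum.distrib cnj_sum add_divide_distrib)
  also have "\<dots> = (conjugate y \<bullet> (G *\<^sub>v y) + cnj (y \<bullet> (G *\<^sub>v conjugate y))) / 2"
    using G y by (simp add: scalar_prod_def mult_mat_vec_def sum_distrib_left lessThan_atLeast0)
  finally show ?thesis .
qed

lemma map_Re_mult_cmat:
  fixes H :: "complex mat" and A :: "real mat"
  assumes "H \<in> carrier_mat n n" and "A \<in> carrier_mat n n"
  shows "map_mat Re H * A = map_mat Re (H * cmat A)"
  using assms by (intro eq_matI) (auto simp: scalar_prod_def Re_sum)

text \<open>\<open>Re H\<close> is the average of \<open>H\<close> and its entrywise conjugate, so its forms at \<open>y\<close> average those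
  of \<open>H\<close> at \<open>y\<close> and at \<open>conjugate y\<close>.\<close>

lemma lyapunov_matrix_map_Re:
  fixes H :: "complex mat" and A :: "real mat"
  assumes H: "H \<in> carrier_mat n n" and A: "A \<in> carrier_mat n n"
    and herm: "\<And>i j. i < n \<Longrightarrow> j < n \<Longrightarrow> H $$ (j, i) = cnj (H $$ (i, j))"
    and pos: "\<And>y. y \<in> carrier_vec n \<Longrightarrow> y \<noteq> 0\<^sub>v n \<Longrightarrow> conjugate y \<bullet> (H *\<^sub>v y) > 0"
    and neg: "\<And>y. y \<in> carrier_vec n \<Longrightarrow> y \<noteq> 0\<^sub>v n \<Longrightarrow> Re (conjugate y \<bullet> ((H * cmat A) *\<^sub>v y)) < 0"
  shows "lyapunov_matrix n A (map_mat Re H)"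
  unfolding lyapunov_matrix_def
proof (intro conjI ballI impI)
  show "map_mat Re H \<in> carrier_mat n n" using H by simp
  show "(map_mat Re H)\<^sup>T = map_mat Re H"
  proof (rule eq_matI)
    fix i j assume "i < dim_row (map_mat Re H)" "j < dim_col (map_mat Re H)"
    then have "i < n" "j < n" using H by auto
    then show "(map_mat Re H)\<^sup>T $$ (i, j) = map_mat Re H $$ (i, j)"
      using herm[of i j] H by simp
  qed (use H in auto)
  fix y :: "complex vec" assume y: "y \<in> carrier_vec n" and y0: "y \<noteq> 0\<^sub>v n"
  have cy: "conjugate y \<in> carrier_vec n" "conjugate y \<noteq> 0\<^sub>v n" using y y0 by auto
  have "0 < conjugate y \<bullet> (H *\<^sub>v y)" "0 < y \<bullet> (H *\<^sub>v conjugate y)"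
    using pos[OF y y0] pos[OF cy] by simp_all
  then show "conjugate y \<bullet> (cmat (map_mat Re H) *\<^sub>v y) > 0"
    unfolding quadratic_form_map_Re[OF H y] by (simp add: less_complex_def)
  have HA: "H * cmat A \<in> carrier_mat n n" using H A by simp
  have "cmat (map_mat Re H) *\<^sub>v (cmat A *\<^sub>v y) = cmat (map_mat Re H * A) *\<^sub>v y"
    using H A y by (simp add: cmat_mult)
  also have "\<dots> = cmat (map_mat Re (H * cmat A)) *\<^sub>v y"
    by (simp only: map_Re_mult_cmat[OF H A])
  finally have "Re (conjugate y \<bullet> (cmat (map_mat Re H) *\<^sub>v (cmat A *\<^sub>v y))) =
      (Re (conjugate y \<bullet> ((H * cmat A) *\<^sub>v y)) + Re (y \<bullet> ((H * cmat A) *\<^sub>v conjugate y))) / 2"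
    by (simp add: quadratic_form_map_Re[OF HA y])
  moreover have "Re (conjugate y \<bullet> ((H * cmat A) *\<^sub>v y)) < 0" "Re (y \<bullet> ((H * cmat A) *\<^sub>v conjugate y)) < 0"
    using neg[OF y y0] neg[OF cy] by simp_all
  ultimately show "Re (conjugate y \<bullet> (cmat (map_mat Re H) *\<^sub>v (cmat A *\<^sub>v y))) < 0"
    by simp
qed

lemma lyapunov_matrix_exists:
  fixes A :: "real mat"
  assumes A: "A \<in> carrier_mat n n" and h: "hurwitz A"
  obtains X where "lyapunov_matrix n A X"
proof -
  have Ac: "cmat A \<in> carrier_mat n n" using A by simp
  have eig: "\<And>ev. eigenvalue (cmat A) ev \<Longrightarrow> Re ev < 0" using h unfolding hurwitz_def by blast
  obtain R S B :: "complex mat"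
    where R: "R \<in> carrier_mat n n" and S: "S \<in> carrier_mat n n" and B: "B \<in> carrier_mat n n"
      and SR: "S * R = 1\<^sub>m n" and RA: "R * cmat A = B * R"
      and diss: "\<And>z. z \<in> carrier_vec n \<Longrightarrow> z \<noteq> 0\<^sub>v n \<Longrightarrow> Re (conjugate z \<bullet> (B *\<^sub>v z)) < 0"
    using stable_similar_dissipative[OF Ac eig] by metis
  define R' where "R' = (map_mat cnj R)\<^sup>T"
  have R': "R' \<in> carrier_mat n n" using R by (simp add: R'_def)
  have R_nonzero: "R *\<^sub>v y \<noteq> 0\<^sub>v n" if "y \<in> carrier_vec n" "y \<noteq> 0\<^sub>v n" for y
  proof
    assume "R *\<^sub>v y = 0\<^sub>v n"
    then have "(S * R) *\<^sub>v y = 0\<^sub>v n"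
      using S R that(1) by (auto intro!: eq_vecI simp: scalar_prod_def)
    then show False using SR that by simp
  qed
  note form = adjoint_mult_quadratic_form[OF R, folded R'_def]
  show ?thesis
  proof (rule that[OF lyapunov_matrix_map_Re[of "R' * R"]])
    show "R' * R \<in> carrier_mat n n" using R' R by simp
    show "(R' * R) $$ (j, i) = cnj ((R' * R) $$ (i, j))" if "i < n" "j < n" for i j
      using R that by (simp add: R'_def scalar_prod_def cnj_sum mult.commute)
    show "conjugate y \<bullet> ((R' * R) *\<^sub>v y) > 0" if "y \<in> carrier_vec n" "y \<noteq> 0\<^sub>v n" for y
    proof -
      have Ry: "R *\<^sub>v y \<in> carrier_vec n" using R that(1) by simp
      have "conjugate y \<bullet> ((R' * R) *\<^sub>v y) = (R *\<^sub>v y) \<bullet>c (R *\<^sub>v y)"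
        using form[OF that(1) R] conjugate_vec_sprod_comm[OF Ry Ry] by simp
      then show ?thesis using R_nonzero[OF that] Ry by simp
    qed
    show "Re (conjugate y \<bullet> ((R' * R * cmat A) *\<^sub>v y)) < 0" if "y \<in> carrier_vec n" "y \<noteq> 0\<^sub>v n" for y
    proof -
      have "R' * R * cmat A = R' * (B * R)" using R' R A by (simp flip: RA)
      then have "conjugate y \<bullet> ((R' * R * cmat A) *\<^sub>v y) = conjugate (R *\<^sub>v y) \<bullet> (B *\<^sub>v (R *\<^sub>v y))"
        using form[of y "B * R"] that(1) B R by simp
      then show ?thesis using diss[OF _ R_nonzero[OF that]] R that(1) by simp
    qed
  qed (rule A)
qed

lemma mat_eq_if_mult_vec_eq:
  fixes A B :: "'a::field mat"
  assumes A: "A \<in> carrier_mat n k" and B: "B \<in> carrier_mat n k"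
    and eq: "\<And>x. x \<in> carrier_vec k \<Longrightarrow> A *\<^sub>v x = B *\<^sub>v x"
  shows "A = B"
proof (rule eq_matI)
  fix i j assume i: "i < dim_row B" and j: "j < dim_col B"
  have "(A *\<^sub>v unit_vec k j) $ i = (B *\<^sub>v unit_vec k j) $ i" using eq[of "unit_vec k j"] by simp
  then show "A $$ (i, j) = B $$ (i, j)" using A B i j by (simp add: mult_mat_vec_def row_def)
qed (use A B in auto)

lemma mat_inverse_exists:
  fixes W :: "'a::field mat"
  assumes W: "W \<in> carrier_mat r r"
    and W_inj: "\<And>a. a \<in> carrier_vec r \<Longrightarrow> W *\<^sub>v a = 0\<^sub>v r \<Longrightarrow> a = 0\<^sub>v r"
  obtains W' where "W' \<in> carrier_mat r r" "W * W' = 1\<^sub>m r" "W' * W = 1\<^sub>m r"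
proof -
  have "det W \<noteq> 0" using det_0_iff_vec_prod_zero_field[OF W] W_inj by auto
  from det_non_zero_imp_unit[OF W this, unfolded Units_def, of "()"] that
  show ?thesis by (auto simp: ring_mat_def)
qed

lemma full_col_rank_mult_vec_eq_0:
  fixes L :: "'a::field mat"
  assumes L: "L \<in> carrier_mat n m" and rank: "vec_space.rank n L = m"
    and b: "b \<in> carrier_vec m" and Lb: "L *\<^sub>v b = 0\<^sub>v n"
  shows "b = 0\<^sub>v m"
proof -
  interpret vec_space "TYPE('a)" n .
  have distinct: "distinct (cols L)"
  proof (rule ccontr)
    assume not_distinct: "\<not> distinct (cols L)"
    have "{} \<subseteq> set (cols L) \<and> lin_indpt {}"
      by (metis (no_types) empty_subsetI fin_dim finite_basis_exists subset_li_is_li vec_vs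
          vectorspace.basis_def)
    then obtain S where S: "maximal S (\<lambda>T. T \<subseteq> set (cols L) \<and> lin_indpt T)"
      using maximal_exists_superset[of "set (cols L)" "\<lambda>T. T \<subseteq> set (cols L) \<and> lin_indpt T" "{}"]
      by auto
    have "rank L = card S" by (rule rank_card_indpt[OF L S])
    also have "\<dots> \<le> card (set (cols L))" using S by (simp add: card_mono maximal_def)
    also have "\<dots> < length (cols L)"
      using not_distinct card_distinct[of "cols L"] card_length[of "cols L"] by linarith
    also have "\<dots> = m" using L by simp
    finally show False using rank by simp
  qed
  have "lin_indpt (set (cols L))" by (rule full_rank_lin_indpt[OF L rank distinct])
  then show ?thesis using lin_depI[OF L b _ Lb distinct] by blast
qed

lemma mat_kernel_basis:
  fixes M :: "'a::field mat"
  assumes M: "M \<in> carrier_mat r n"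
  obtains V k where "V \<in> carrier_mat n k" "M * V = 0\<^sub>m r k"
    and "\<And>a. a \<in> carrier_vec k \<Longrightarrow> V *\<^sub>v a = 0\<^sub>v n \<Longrightarrow> a = 0\<^sub>v k"
    and "\<And>u. u \<in> carrier_vec n \<Longrightarrow> M *\<^sub>v u = 0\<^sub>v r \<Longrightarrow> \<exists>a \<in> carrier_vec k. u = V *\<^sub>v a"
proof -
  obtain B where B: "finite B" "kernel.basis n M B" using kernel_basis_exists[OF M] by auto
  interpret K: kernel r n M by (unfold_locales) (rule M)
  have B_ker: "B \<subseteq> mat_kernel M" and "K.lin_indpt B" and "K.span B = mat_kernel M"
    using B(2) unfolding K.Ker.basis_def by auto
  then have indpt: "\<not> K.NC.lin_dep B" and span: "K.NC.span B = mat_kernel M"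
    using K.lindep_same[OF B_ker] K.span_same[OF B_ker] by auto
  obtain bs where bs: "distinct bs" "set bs = B" using finite_distinct_list[OF B(1)] by auto
  have B_carrier: "B \<subseteq> carrier_vec n" using B_ker mat_kernel_carrier[OF M] by auto
  define V where "V = mat_of_cols n bs"
  have V: "V \<in> carrier_mat n (length bs)" unfolding V_def by simp
  have cols_V: "cols V = bs" unfolding V_def using B_carrier bs by simp
  show ?thesis
  proof (rule that[OF V])
    show "M * V = 0\<^sub>m r (length bs)"
    proof (rule eq_matI)
      fix i j assume i: "i < dim_row (0\<^sub>m r (length bs) :: 'a mat)"
        and j: "j < dim_col (0\<^sub>m r (length bs) :: 'a mat)"
      have "col V j \<in> B" using cols_V bs j V by (metis cols_length cols_nth index_zero_mat(3) nth_mem)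
      then have "M *\<^sub>v col V j = 0\<^sub>v r" using B_ker mat_kernelD[OF M] by auto
      then have "(M *\<^sub>v col V j) $ i = 0" using i by simp
      then show "(M * V) $$ (i, j) = 0\<^sub>m r (length bs) $$ (i, j)"
        using i j M V by (simp add: mult_mat_vec_def)
    qed (use M V in auto)
  next
    fix a assume a: "a \<in> carrier_vec (length bs)" and Va: "V *\<^sub>v a = 0\<^sub>v n"
    show "a = 0\<^sub>v (length bs)"
      using K.NC.lin_depI[OF V a _ Va] cols_V bs indpt by auto
  next
    fix u assume "u \<in> carrier_vec n" and "M *\<^sub>v u = 0\<^sub>v r"
    then have "u \<in> K.NC.span (set bs)" using mat_kernelI[OF M] span bs by simp
    then have "u \<in> K.NC.span_list bs" using K.NC.span_list_as_span[of bs] B_carrier bs by simp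
    then obtain c where "u = K.NC.lincomb_list c bs" unfolding K.NC.span_list_def by auto
    also have "\<dots> = V *\<^sub>v vec (length bs) c" unfolding V_def
      by (rule K.NC.lincomb_list_as_mat_mult) (use B_carrier bs in auto)
    finally show "\<exists>a \<in> carrier_vec (length bs). u = V *\<^sub>v a" by auto
  qed
qed

lemma weighted_gram_mult_vec_eq_0:
  fixes X M :: "real mat"
  assumes X: "X \<in> carrier_mat n n" and M: "M \<in> carrier_mat n k"
    and X_pos: "\<And>x. x \<in> carrier_vec n \<Longrightarrow> x \<noteq> 0\<^sub>v n \<Longrightarrow> x \<bullet> (X *\<^sub>v x) > 0"
    and M_inj: "\<And>a. a \<in> carrier_vec k \<Longrightarrow> M *\<^sub>v a = 0\<^sub>v n \<Longrightarrow> a = 0\<^sub>v k"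
    and a: "a \<in> carrier_vec k" and Ga: "(M\<^sup>T * X * M) *\<^sub>v a = 0\<^sub>v k"
  shows "a = 0\<^sub>v k"
proof -
  have Ma: "M *\<^sub>v a \<in> carrier_vec n" and XMa: "X *\<^sub>v (M *\<^sub>v a) \<in> carrier_vec n" using X M a by auto
  have "(M\<^sup>T * X * M) *\<^sub>v a = (M\<^sup>T * X) *\<^sub>v (M *\<^sub>v a)"
    by (rule assoc_mult_mat_vec) (use X M a in auto)
  also have "\<dots> = M\<^sup>T *\<^sub>v (X *\<^sub>v (M *\<^sub>v a))"
    by (rule assoc_mult_mat_vec) (use X M a in auto)
  finally have "M\<^sup>T *\<^sub>v (X *\<^sub>v (M *\<^sub>v a)) = 0\<^sub>v k" using Ga by simp
  then have "0 = a \<bullet> (M\<^sup>T *\<^sub>v (X *\<^sub>v (M *\<^sub>v a)))" using a by simp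
  also have "\<dots> = (M *\<^sub>v a) \<bullet> (X *\<^sub>v (M *\<^sub>v a))"
    using transpose_vec_mult_scalar[OF M a XMa] comm_scalar_prod[OF XMa Ma]
      comm_scalar_prod[OF a, of "M\<^sup>T *\<^sub>v (X *\<^sub>v (M *\<^sub>v a))"] M XMa by simp
  finally have "M *\<^sub>v a = 0\<^sub>v n" using X_pos[OF Ma] by force
  then show ?thesis by (rule M_inj[OF a])
qed

lemma weighted_left_inverse_exists:
  fixes X M :: "real mat"
  assumes X: "X \<in> carrier_mat n n" and M: "M \<in> carrier_mat n k"
    and X_pos: "\<And>x. x \<in> carrier_vec n \<Longrightarrow> x \<noteq> 0\<^sub>v n \<Longrightarrow> x \<bullet> (X *\<^sub>v x) > 0"
    and M_inj: "\<And>a. a \<in> carrier_vec k \<Longrightarrow> M *\<^sub>v a = 0\<^sub>v n \<Longrightarrow> a = 0\<^sub>v k"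
  obtains W where "W \<in> carrier_mat k k" "(M\<^sup>T * X * M) * W = 1\<^sub>m k" "W * M\<^sup>T * X * M = 1\<^sub>m k"
proof -
  have G: "M\<^sup>T * X * M \<in> carrier_mat k k" using X M by auto
  obtain W where W: "W \<in> carrier_mat k k" "(M\<^sup>T * X * M) * W = 1\<^sub>m k" "W * (M\<^sup>T * X * M) = 1\<^sub>m k"
    using mat_inverse_exists[OF G weighted_gram_mult_vec_eq_0[OF X M X_pos M_inj]] by blast
  moreover have "W * M\<^sup>T * X * M = W * (M\<^sup>T * X * M)"
    using W(1) X M by (smt (verit) assoc_mult_mat mult_carrier_mat transpose_carrier_mat)
  ultimately show ?thesis using that by simp
qed

lemma weighted_left_inverse_orthogonal:
  fixes X M V U W :: "real mat"
  assumes X: "X \<in> carrier_mat n n" "X\<^sup>T = X" and M: "M \<in> carrier_mat n m"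
    and V: "V \<in> carrier_mat n k" and U: "U \<in> carrier_mat j k"
    and W: "W \<in> carrier_mat m m" "(M\<^sup>T * X * M) * W = 1\<^sub>m m" and WV: "W * M\<^sup>T * X * V = 0\<^sub>m m k"
  shows "U * V\<^sup>T * X * M = 0\<^sub>m j m"
proof -
  have G: "M\<^sup>T * X * M \<in> carrier_mat m m" and N: "M\<^sup>T * X * V \<in> carrier_mat m k"
    using X M V by auto
  have "W * (M\<^sup>T * X * V) = W * M\<^sup>T * X * V"
    using X M V W by (smt (verit) assoc_mult_mat mult_carrier_mat transpose_carrier_mat)
  then have WN: "W * (M\<^sup>T * X * V) = 0\<^sub>m m k" using WV by simp
  have "M\<^sup>T * X * V = ((M\<^sup>T * X * M) * W) * (M\<^sup>T * X * V)"
    using W(2) left_mult_one_mat[OF N] by simp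
  also have "\<dots> = (M\<^sup>T * X * M) * (W * (M\<^sup>T * X * V))"
    by (rule assoc_mult_mat[OF G W(1) N])
  also have "\<dots> = 0\<^sub>m m k" unfolding WN by (rule right_mult_zero_mat[OF G])
  finally have "0\<^sub>m k m = (M\<^sup>T * X * V)\<^sup>T" by simp
  also have "\<dots> = V\<^sup>T * (M\<^sup>T * X)\<^sup>T"
    by (rule transpose_mult[of _ m n]) (use X M V in auto)
  also have "(M\<^sup>T * X)\<^sup>T = X * M"
    by (subst transpose_mult[of _ m n]) (use X M in auto)
  also have "V\<^sup>T * (X * M) = V\<^sup>T * X * M"
    by (rule assoc_mult_mat[symmetric]) (use X M V in auto)
  finally have VXM: "V\<^sup>T * X * M = 0\<^sub>m k m" ..
  have "U * V\<^sup>T * X * M = U * (V\<^sup>T * X * M)"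
    using X M V U by (smt (verit) assoc_mult_mat mult_carrier_mat transpose_carrier_mat)
  then show ?thesis using U by (simp add: VXM)
qed

lemma complementary_left_inverses_sum:
  fixes V L P Q :: "'a::field mat"
  assumes V: "V \<in> carrier_mat n k" and L: "L \<in> carrier_mat n m"
    and P: "P \<in> carrier_mat k n" and Q: "Q \<in> carrier_mat m n"
    and PV: "P * V = 1\<^sub>m k" and PL: "P * L = 0\<^sub>m k m" and QL: "Q * L = 1\<^sub>m m"
    and ker_Q: "\<And>u. u \<in> carrier_vec n \<Longrightarrow> Q *\<^sub>v u = 0\<^sub>v m \<Longrightarrow> \<exists>a \<in> carrier_vec k. u = V *\<^sub>v a"
  shows "V * P + L * Q = 1\<^sub>m n"
proof (rule mat_eq_if_mult_vec_eq)
  show "V * P + L * Q \<in> carrier_mat n n" "1\<^sub>m n \<in> carrier_mat n n" using V P L Q by auto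
  fix x :: "'a vec" assume x: "x \<in> carrier_vec n"
  define c where "c = Q *\<^sub>v x"
  have c: "c \<in> carrier_vec m" using Q x by (simp add: c_def)
  have "Q *\<^sub>v (x - L *\<^sub>v c) = c - (Q * L) *\<^sub>v c"
    using Q L x c by (simp add: mult_minus_distrib_mat_vec c_def)
  then have "Q *\<^sub>v (x - L *\<^sub>v c) = 0\<^sub>v m" using QL c by simp
  then obtain a where a: "a \<in> carrier_vec k" and diff: "x - L *\<^sub>v c = V *\<^sub>v a"
    using ker_Q[of "x - L *\<^sub>v c"] x L c by auto
  have x_eq: "x = V *\<^sub>v a + L *\<^sub>v c"
  proof (rule eq_vecI)
    fix i assume "i < dim_vec (V *\<^sub>v a + L *\<^sub>v c)"
    then show "x $ i = (V *\<^sub>v a + L *\<^sub>v c) $ i"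
      using arg_cong[OF diff, of "\<lambda>v. v $ i"] x L c V a by (auto simp: algebra_simps)
  qed (use x V a L in auto)
  have "P *\<^sub>v x = (P * V) *\<^sub>v a + (P * L) *\<^sub>v c"
    unfolding x_eq using P V L a c by (simp add: mult_add_distrib_mat_vec)
  moreover have "0\<^sub>m k m *\<^sub>v c = 0\<^sub>v k" using c by (intro eq_vecI) auto
  ultimately have "P *\<^sub>v x = a" using PV PL a by simp
  have "(V * P + L * Q) *\<^sub>v x = (V * P) *\<^sub>v x + (L * Q) *\<^sub>v x"
    by (rule add_mult_distrib_mat_vec[of _ n n]) (use V P L Q x in auto)
  also have "\<dots> = V *\<^sub>v a + L *\<^sub>v c"
    using V P L Q x \<open>P *\<^sub>v x = a\<close> by (simp add: c_def)
  finally have "(V * P + L * Q) *\<^sub>v x = V *\<^sub>v a + L *\<^sub>v c" .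
  then show "(V * P + L * Q) *\<^sub>v x = 1\<^sub>m n *\<^sub>v x" using x x_eq by simp
qed

lemma weighted_orthogonal_splitting:
  fixes X L :: "real mat"
  assumes X: "X \<in> carrier_mat n n" "X\<^sup>T = X"
    and X_pos: "\<And>x. x \<in> carrier_vec n \<Longrightarrow> x \<noteq> 0\<^sub>v n \<Longrightarrow> x \<bullet> (X *\<^sub>v x) > 0"
    and L: "L \<in> carrier_mat n m"
    and L_inj: "\<And>b. b \<in> carrier_vec m \<Longrightarrow> L *\<^sub>v b = 0\<^sub>v n \<Longrightarrow> b = 0\<^sub>v m"
  obtains V k W Wb where "V \<in> carrier_mat n k"
    and "\<And>a. a \<in> carrier_vec k \<Longrightarrow> V *\<^sub>v a = 0\<^sub>v n \<Longrightarrow> a = 0\<^sub>v k"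
    and "W \<in> carrier_mat k k" "(V\<^sup>T * X * V) * W = 1\<^sub>m k" "W * V\<^sup>T * X * V = 1\<^sub>m k"
    and "Wb \<in> carrier_mat m m" "(L\<^sup>T * X * L) * Wb = 1\<^sub>m m" "Wb * L\<^sup>T * X * L = 1\<^sub>m m"
    and "W * V\<^sup>T * X * L = 0\<^sub>m k m"
    and "V * (W * V\<^sup>T * X) + L * (Wb * L\<^sup>T * X) = 1\<^sub>m n"
proof -
  obtain Wb where Wb: "Wb \<in> carrier_mat m m" "(L\<^sup>T * X * L) * Wb = 1\<^sub>m m" "Wb * L\<^sup>T * X * L = 1\<^sub>m m"
    by (rule weighted_left_inverse_exists[OF X(1) L X_pos L_inj])
  define Pb where "Pb = Wb * L\<^sup>T * X"
  have Pb: "Pb \<in> carrier_mat m n" using Wb L X by (simp add: Pb_def)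
  obtain V k where V: "V \<in> carrier_mat n k" and PbV: "Pb * V = 0\<^sub>m m k"
    and V_inj: "\<And>a. a \<in> carrier_vec k \<Longrightarrow> V *\<^sub>v a = 0\<^sub>v n \<Longrightarrow> a = 0\<^sub>v k"
    and ker_Pb: "\<And>u. u \<in> carrier_vec n \<Longrightarrow> Pb *\<^sub>v u = 0\<^sub>v m \<Longrightarrow> \<exists>a \<in> carrier_vec k. u = V *\<^sub>v a"
    using mat_kernel_basis[OF Pb] by metis
  obtain W where W: "W \<in> carrier_mat k k" "(V\<^sup>T * X * V) * W = 1\<^sub>m k" "W * V\<^sup>T * X * V = 1\<^sub>m k"
    by (rule weighted_left_inverse_exists[OF X(1) V X_pos V_inj])
  define P where "P = W * V\<^sup>T * X"
  have P: "P \<in> carrier_mat k n" using W V X by (simp add: P_def)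
  have PL: "P * L = 0\<^sub>m k m"
    unfolding P_def by (rule weighted_left_inverse_orthogonal[OF X L V W(1) Wb(1,2) PbV[unfolded Pb_def]])
  have "V * P + L * Pb = 1\<^sub>m n"
    by (rule complementary_left_inverses_sum[OF V L P Pb _ PL _ ker_Pb])
      (use W(3) Wb(3) in \<open>simp_all only: P_def Pb_def\<close>)
  with V V_inj W Wb PL show ?thesis unfolding P_def Pb_def by (rule that)
qed

theorem lemma2:
  fixes A L :: "real mat" and n m :: nat
  assumes "A \<in> carrier_mat n n" and "hurwitz A"
    and "L \<in> carrier_mat n m" and "vec_space.rank n L = m"
  shows "\<exists>k P Pd Pb Pbd.
    P \<in> carrier_mat k n \<and> Pd \<in> carrier_mat n k \<and>
    Pb \<in> carrier_mat m n \<and> Pbd \<in> carrier_mat n m \<and>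
    P * Pd = 1\<^sub>m k \<and> Pb * Pbd = 1\<^sub>m m \<and>
    Pd * P + Pbd * Pb = 1\<^sub>m n \<and>
    hurwitz (P * A * Pd) \<and> hurwitz (Pb * A * Pbd) \<and>
    P * L = 0\<^sub>m k m \<and> invertible_mat (Pb * L)"
proof -
  obtain X where X: "lyapunov_matrix n A X" using lyapunov_matrix_exists[OF assms(1,2)] .
  then have X_carrier: "X \<in> carrier_mat n n" and X_sym: "X\<^sup>T = X"
    unfolding lyapunov_matrix_def by blast+
  have X_pos: "\<And>x. x \<in> carrier_vec n \<Longrightarrow> x \<noteq> 0\<^sub>v n \<Longrightarrow> x \<bullet> (X *\<^sub>v x) > 0"
    by (rule lyapunov_matrix_pos_real[OF X])
  have L_inj: "\<And>b. b \<in> carrier_vec m \<Longrightarrow> L *\<^sub>v b = 0\<^sub>v n \<Longrightarrow> b = 0\<^sub>v m"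
    by (rule full_col_rank_mult_vec_eq_0[OF assms(3,4)])
  show ?thesis
  proof (rule weighted_orthogonal_splitting[where X = X and L = L])
    fix V k W Wb
    assume V: "V \<in> carrier_mat n k"
      and V_inj: "\<And>a. a \<in> carrier_vec k \<Longrightarrow> V *\<^sub>v a = 0\<^sub>v n \<Longrightarrow> a = 0\<^sub>v k"
      and W: "W \<in> carrier_mat k k" "(V\<^sup>T * X * V) * W = 1\<^sub>m k" "W * V\<^sup>T * X * V = 1\<^sub>m k"
      and Wb: "Wb \<in> carrier_mat m m" "(L\<^sup>T * X * L) * Wb = 1\<^sub>m m" "Wb * L\<^sup>T * X * L = 1\<^sub>m m"
      and "W * V\<^sup>T * X * L = 0\<^sub>m k m" "V * (W * V\<^sup>T * X) + L * (Wb * L\<^sup>T * X) = 1\<^sub>m n"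
    moreover have "hurwitz (W * V\<^sup>T * X * A * V)"
      by (rule hurwitz_compression[OF assms(1) X V V_inj W(1,2)])
    moreover have "hurwitz (Wb * L\<^sup>T * X * A * L)"
      by (rule hurwitz_compression[OF assms(1) X assms(3) L_inj Wb(1,2)])
    moreover have "invertible_mat (Wb * L\<^sup>T * X * L)"
      unfolding Wb(3) invertible_mat_def inverts_mat_def by (intro conjI exI[of _ "1\<^sub>m m"]) auto
    moreover have "W * V\<^sup>T * X \<in> carrier_mat k n" "Wb * L\<^sup>T * X \<in> carrier_mat m n"
      using V W(1) Wb(1) assms(3) X_carrier by auto
    ultimately show ?thesis using assms(3) by blast
  qed (use X_carrier X_sym X_pos assms(3) L_inj in auto)
qed

end
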